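(* For all $N\subseteq\mathbf{U}$, $w\in\mathbb{W}(N)$, $j\in N$, and $T\subseteq N\setminus\{j\}$ such that $j$ is a null player in $w$, we have $\mathrm{MPW}_j(w^{r^\star}_{-T})=0$.
   Context: $\mathbf{U}$ is a finite set of players; cardinalities of $N,S,B$ are $n,s,b$. $\Pi(N)$ is the set of partitions of $N$ ($\Pi(\emptyset)=\{\emptyset\}$). $p^\star$ is the Ewens distribution $p^\star_N(\pi)=\frac{\prod_{B\in\pi}(b-1)!}{n!}$. $\pi_{+i\leadsto B}=(\pi\setminus\{B\})\cup\{B\cup\{i\}\}$ for $B\in\pi$, $\pi_{+i\leadsto\emptyset}=\pi\cup\{\{i\}\}$. Embedded coalitions $\mathcal{E}(N)=\{(S,\pi):S\subseteq N,\pi\in\Pi(N\setminus S)\}$; a TUX game on $N$ is $w:\mathcal{E}(N)\to\mathbb{R}$ with $w(\emptyset,\pi)=0$; $\mathbb{W}(N)$ their set. The restriction operator $r^\star$ maps $w\in\mathbb{W}(N)$, $i\in N$ to $w^{r^\star}_{-i}\in\mathbb{W}(N\setminus\{i\})$, $w^{r^\star}_{-i}(S,\pi)=\frac{1}{n-s}w(S,\pi_{+i\leadsto\emptyset})+\sum_{B\in\pi}\frac{b}{n-s}w(S,\pi_{+i\leadsto B})$ for $(S,\pi)\in\mathcal{E}(N\setminus\{i\})$; it is path independent ($(w^{r^\star}_{-i})^{r^\star}_{-k}=(w^{r^\star}_{-k})^{r^\star}_{-i}$), so $w^{r^\star}_{-T}$ (removing the players of $T$ successively, in any order) is well defined, with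 $w^{r^\star}_{-\emptyset}=w$. Player $j$ is a null player in $w$ if $w(S\cup\{j\},\pi)=w(S,\pi_{+j\leadsto B})$ for all $(S,\pi)\in\mathcal{E}(N\setminus\{j\})$, $B\in\pi\cup\{\emptyset\}$. The Shapley value of a TU game $v$ is $\mathrm{Sh}_i(v)=\sum_{S\subseteq N\setminus\{i\}}\frac{s!(n-s-1)!}{n!}(v(S\cup\{i\})-v(S))$; the MPW solution is $\mathrm{MPW}(w)=\mathrm{Sh}(\bar v^\star_w)$ with $\bar v^\star_w(S)=\sum_{\pi\in\Pi(N\setminus S)}p^\star_{N\setminus S}(\pi)w(S,\pi)$. *)

theory Defs
  imports Complex_Main "HOL-Library.Disjoint_Sets"
begin

definition partitions :: "'a set \<Rightarrow> 'a set set set" where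
  "partitions N = {P. partition_on N P}"

text \<open>A TUX game is a function on pairs (S, pi); only its values on embedded coalitions
  of N matter.\<close>
type_synonym 'a tux = "'a set \<Rightarrow> 'a set set \<Rightarrow> real"

definition embedded :: "'a set \<Rightarrow> ('a set \<times> 'a set set) set" where
  "embedded N = {(S, P). S \<subseteq> N \<and> P \<in> partitions (N - S)}"

definition tux_game :: "'a set \<Rightarrow> 'a tux \<Rightarrow> bool" where
  "tux_game N w \<longleftrightarrow> (\<forall>P \<in> partitions N. w {} P = 0)"

definition add_to :: "'a set set \<Rightarrow> 'a \<Rightarrow> 'a set \<Rightarrow> 'a set set" where
  "add_to P i B = (if B = {} then insert {i} P else insert (insert i B) (P - {B}))"

definition restr :: "'a set \<Rightarrow> 'a tux \<Rightarrow> 'a \<Rightarrow> 'a tux" where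
  "restr N w i = (\<lambda>S P.
     w S (add_to P i {}) / real (card N - card S)
     + (\<Sum>B\<in>P. real (card B) / real (card N - card S) * w S (add_to P i B)))"

fun restr_list :: "'a set \<Rightarrow> 'a tux \<Rightarrow> 'a list \<Rightarrow> 'a tux" where
  "restr_list N w [] = w"
| "restr_list N w (i # is) = restr_list (N - {i}) (restr N w i) is"

definition null_player :: "'a set \<Rightarrow> 'a tux \<Rightarrow> 'a \<Rightarrow> bool" where
  "null_player N w j \<longleftrightarrow>
     (\<forall>(S, P) \<in> embedded (N - {j}). \<forall>B \<in> P \<union> {{}}. w (insert j S) P = w S (add_to P j B))"

definition ewens :: "'a set \<Rightarrow> 'a set set \<Rightarrow> real" where
  "ewens N P = (\<Prod>B\<in>P. fact (card B - 1)) / fact (card N)"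

definition shapley :: "'a set \<Rightarrow> ('a set \<Rightarrow> real) \<Rightarrow> 'a \<Rightarrow> real" where
  "shapley N v i = (\<Sum>S \<in> Pow (N - {i}).
      fact (card S) * fact (card N - card S - 1) / fact (card N) * (v (insert i S) - v S))"

definition avg_game :: "'a set \<Rightarrow> 'a tux \<Rightarrow> 'a set \<Rightarrow> real" where
  "avg_game N w S = (\<Sum>P \<in> partitions (N - S). ewens (N - S) P * w S P)"

definition MPW :: "'a set \<Rightarrow> 'a tux \<Rightarrow> 'a \<Rightarrow> real" where
  "MPW N w = shapley N (avg_game N w)"

end

theory Submission
  imports Defs
begin

text \<open>Every partition of X \<union> {i} (with i \<notin> X) arises exactly once from a partition \<pi> of X by
  adding i as a singleton or to a block B of \<pi>, and this multiplies the Ewens weight by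
  1/(|X|+1) resp. |B|/(|X|+1) -- precisely the weights of the restriction operator.
  Hence restricting a game does not change its Ewens-averaged TU game on the remaining
  coalitions. For a null player j the restriction weights all multiply the same value
  w(S \<union> {j}, \<pi>), so the averaged game satisfies v(S \<union> {j}) = v(S), and the Shapley value of
  j vanishes.\<close>

lemma partition_on_add_to:
  assumes "partition_on X P" "i \<notin> X" "B \<in> insert {} P"
  shows "partition_on (insert i X) (add_to P i B)"
  using assms unfolding add_to_def partition_on_def disjoint_def by (auto; blast)

definition remove_from :: "'a set set \<Rightarrow> 'a \<Rightarrow> 'a set set \<times> 'a set" where
  "remove_from Q i = ((\<lambda>D. D - {i}) ` Q - {{}}, \<Union>{D \<in> Q. i \<in> D} - {i})"

lemma remove_from_add_to:
  assumes "partition_on X P" "i \<notin> X" "B \<in> insert {} P"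
  shows "remove_from (add_to P i B) i = (P, B)"
proof -
  have i: "\<And>D. D \<in> P \<Longrightarrow> i \<notin> D" and ne: "{} \<notin> P"
    using assms partition_onD1 partition_onD3 by blast+
  then have "(\<lambda>D. D - {i}) ` P = P" by (auto simp: image_iff)
  then show ?thesis
    using assms(3) i ne by (auto simp: remove_from_def add_to_def image_insert[symmetric])
qed

lemma add_to_remove_from:
  assumes Q: "partition_on (insert i X) Q" and "i \<notin> X" and "remove_from Q i = (P, B)"
  shows "partition_on X P" "B \<in> insert {} P" "add_to P i B = Q"
proof -
  obtain C where C: "C \<in> Q" "i \<in> C" using partition_onD1[OF Q] by blast
  have disj: "\<And>D. D \<in> Q \<Longrightarrow> D \<noteq> C \<Longrightarrow> D \<inter> C = {}"
    using partition_onD2[OF Q] C unfolding disjoint_def by blast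
  have ne: "{} \<notin> Q" using partition_onD3[OF Q] .
  have "{D \<in> Q. i \<in> D} = {C}" using C disj by blast
  then have B: "B = C - {i}" using assms(3) by (simp add: remove_from_def)
  have "(\<lambda>D. D - {i}) ` Q = insert (C - {i}) (Q - {C})"
  proof -
    have "D - {i} = D" if "D \<in> Q - {C}" for D using that C disj by blast
    then have "(\<lambda>D. D - {i}) ` (Q - {C}) = Q - {C}" by simp
    moreover have "Q = insert C (Q - {C})" using C by blast
    ultimately show ?thesis by (metis image_insert)
  qed
  then have P: "P = insert (C - {i}) (Q - {C}) - {{}}"
    using assms(3) by (simp add: remove_from_def)
  have "partition_on (- {i} \<inter> insert i X) ((\<inter>) (- {i}) ` Q - {{}})"
    using partition_on_restrict[OF Q] .
  moreover have "- {i} \<inter> insert i X = X" using assms(2) by blast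
  moreover have "(\<inter>) (- {i}) = (\<lambda>D. D - {i})" by auto
  ultimately show "partition_on X P"
    using assms(3) by (simp add: remove_from_def)
  show "B \<in> insert {} P" using B P by blast
  show "add_to P i B = Q"
  proof (cases "C - {i} = {}")
    case True
    then have "C = {i}" using C by blast
    then show ?thesis using True B P C ne by (auto simp: add_to_def)
  next
    case False
    then have "C - {i} \<notin> Q - {C}" using disj by blast
    then have "P - {B} = Q - {C}" using B P ne by blast
    moreover have "insert i B = C" using B C by blast
    ultimately show ?thesis using False B C by (auto simp: add_to_def)
  qed
qed

lemma bij_betw_add_to:
  assumes "i \<notin> X"
  shows "bij_betw (\<lambda>(P, B). add_to P i B) (SIGMA P:partitions X. insert {} P) (partitions (insert i X))"
proof (rule bij_betw_byWitness[where f' = "\<lambda>Q. remove_from Q i"])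
  show "\<forall>x \<in> SIGMA P:partitions X. insert {} P. remove_from ((\<lambda>(P, B). add_to P i B) x) i = x"
    using remove_from_add_to[OF _ assms] by (auto simp: partitions_def)
  show "\<forall>Q \<in> partitions (insert i X). (\<lambda>(P, B). add_to P i B) (remove_from Q i) = Q"
    using add_to_remove_from(3)[OF _ assms] by (auto simp: partitions_def split: prod.split)
  show "(\<lambda>(P, B). add_to P i B) ` (SIGMA P:partitions X. insert {} P) \<subseteq> partitions (insert i X)"
    using partition_on_add_to[OF _ assms] by (auto simp: partitions_def)
  show "(\<lambda>Q. remove_from Q i) ` partitions (insert i X) \<subseteq> (SIGMA P:partitions X. insert {} P)"
  proof
    fix x assume "x \<in> (\<lambda>Q. remove_from Q i) ` partitions (insert i X)"
    then obtain Q where Q: "partition_on (insert i X) Q" and x: "x = remove_from Q i"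
      by (auto simp: partitions_def)
    obtain P B where PB: "remove_from Q i = (P, B)" by fastforce
    show "x \<in> (SIGMA P:partitions X. insert {} P)"
      using add_to_remove_from(1,2)[OF Q assms PB] x PB by (simp add: partitions_def)
  qed
qed

lemma ewens_add_to_empty:
  assumes "finite X" "i \<notin> X" "partition_on X P"
  shows "ewens (insert i X) (add_to P i {}) = ewens X P / (real (card X) + 1)"
proof -
  have "finite P" using finite_elements assms(1,3) .
  moreover have "{i} \<notin> P" using assms(2,3) partition_onD1 by blast
  ultimately show ?thesis
    using assms(1,2) by (simp add: ewens_def add_to_def fact_Suc)
qed

lemma ewens_add_to_block:
  assumes "finite X" "i \<notin> X" "partition_on X P" "B \<in> P"
  shows "ewens (insert i X) (add_to P i B) = ewens X P * real (card B) / (real (card X) + 1)"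
proof -
  have fP: "finite P" using finite_elements assms(1,3) .
  have "B \<subseteq> X" "B \<noteq> {}" "i \<notin> B" "insert i B \<notin> P"
    using assms partition_onD1 partition_onD3 by blast+
  then have "finite B" "card B > 0" "card (insert i B) = Suc (card B)"
    using assms(1) finite_subset card_gt_0_iff by fastforce+
  then have fB: "fact (card (insert i B) - 1) = real (card B) * fact (card B - 1)"
    by (simp add: fact_reduce)
  have "(\<Prod>C\<in>add_to P i B. fact (card C - 1) :: real)
      = fact (card (insert i B) - 1) * (\<Prod>C\<in>P - {B}. fact (card C - 1))"
    using \<open>B \<noteq> {}\<close> \<open>insert i B \<notin> P\<close> fP by (simp add: add_to_def)
  also have "\<dots> = real (card B) * (\<Prod>C\<in>P. fact (card C - 1))"
    using fB by (simp add: prod.remove[OF fP assms(4)])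
  finally show ?thesis
    using assms(1,2) by (simp add: ewens_def fact_Suc ac_simps)
qed

lemma sum_card_blocks:
  assumes "finite X" "partition_on X P"
  shows "(\<Sum>B\<in>P. card B) = card X"
proof -
  have "finite B" if "B \<in> P" for B
    using that assms(1) partition_onD1[OF assms(2)] by (meson Union_upper finite_subset)
  then show ?thesis
    using card_Union_disjoint[OF partition_onD2[OF assms(2)]] partition_onD1[OF assms(2)] by simp
qed

lemma sum_partitions_insert:
  assumes "finite X" "i \<notin> X"
  shows "(\<Sum>Q\<in>partitions (insert i X). ewens (insert i X) Q * f Q)
    = (\<Sum>P\<in>partitions X. ewens X P * (f (add_to P i {}) / (real (card X) + 1)
         + (\<Sum>B\<in>P. real (card B) / (real (card X) + 1) * f (add_to P i B))))"
proof -
  let ?h = "\<lambda>Q. ewens (insert i X) Q * f Q"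
  have "finite (partitions X)"
    using finitely_many_partition_on[OF assms(1)] by (simp add: partitions_def)
  moreover have "finite P" if "P \<in> partitions X" for P
    using finite_elements[OF assms(1)] that by (simp add: partitions_def)
  ultimately have "(\<Sum>Q\<in>partitions (insert i X). ?h Q)
      = (\<Sum>P\<in>partitions X. \<Sum>B\<in>insert {} P. ?h (add_to P i B))"
    using sum.reindex_bij_betw[OF bij_betw_add_to[OF assms(2)], of ?h]
    by (simp add: sum.Sigma split_def)
  also have "\<dots> = (\<Sum>P\<in>partitions X. ewens X P * (f (add_to P i {}) / (real (card X) + 1)
         + (\<Sum>B\<in>P. real (card B) / (real (card X) + 1) * f (add_to P i B))))"
  proof (rule sum.cong[OF refl])
    fix P assume "P \<in> partitions X"
    then have P: "partition_on X P" by (simp add: partitions_def)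
    have "finite P" "{} \<notin> P" using finite_elements[OF assms(1) P] partition_onD3[OF P] .
    then show "(\<Sum>B\<in>insert {} P. ?h (add_to P i B)) = ewens X P * (f (add_to P i {}) / (real (card X) + 1)
         + (\<Sum>B\<in>P. real (card B) / (real (card X) + 1) * f (add_to P i B)))"
      using ewens_add_to_empty[OF assms P] ewens_add_to_block[OF assms P]
      by (simp add: algebra_simps sum_distrib_left)
  qed
  finally show ?thesis .
qed

lemma card_diff_coalition:
  assumes "finite N" "i \<in> N" "S \<subseteq> N - {i}"
  shows "card N - card S = Suc (card (N - {i} - S))"
proof -
  have "N - S = insert i (N - {i} - S)" using assms(2,3) by blast
  then have "card (N - S) = Suc (card (N - {i} - S))" using assms(1) by simp
  moreover have "card (N - S) = card N - card S"
    using assms by (intro card_Diff_subset) (auto intro: finite_subset)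
  ultimately show ?thesis by simp
qed

lemma avg_game_restr:
  assumes "finite N" "i \<in> N" "S \<subseteq> N - {i}"
  shows "avg_game (N - {i}) (restr N w i) S = avg_game N w S"
proof -
  define X where "X = N - {i} - S"
  have "N - S = insert i X" "i \<notin> X" "finite X" using assms by (auto simp: X_def)
  moreover have "real (card N - card S) = real (card X) + 1"
    using card_diff_coalition[OF assms] by (simp add: X_def)
  ultimately show ?thesis
    using sum_partitions_insert[of X i "w S"]
    by (simp add: avg_game_def restr_def X_def set_diff_eq ac_simps)
qed

lemma avg_game_restr_list:
  assumes "finite N" "distinct xs" "set xs \<subseteq> N" "S \<subseteq> N - set xs"
  shows "avg_game (N - set xs) (restr_list N w xs) S = avg_game N w S"
  using assms
proof (induction xs arbitrary: N w)
  case Nil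
  then show ?case by simp
next
  case (Cons i xs)
  have "avg_game (N - {i} - set xs) (restr_list (N - {i}) (restr N w i) xs) S
      = avg_game (N - {i}) (restr N w i) S"
    using Cons by (intro Cons.IH) auto
  also have "\<dots> = avg_game N w S"
    using Cons by (intro avg_game_restr) auto
  finally show ?case by (simp add: Diff_insert2[symmetric])
qed

lemma restr_null_player:
  assumes "finite N" "j \<in> N" "null_player N w j" "(S, P) \<in> embedded (N - {j})"
  shows "restr N w j S P = w (insert j S) P"
proof -
  define X where "X = N - {j} - S"
  have S: "S \<subseteq> N - {j}" and P: "partition_on X P"
    using assms(4) by (auto simp: embedded_def partitions_def X_def)
  have null: "w S (add_to P j B) = w (insert j S) P" if "B \<in> insert {} P" for B
    using assms(3,4) that unfolding null_player_def by fastforce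
  have "real (card N - card S) = real (card X) + 1"
    using card_diff_coalition[OF assms(1,2) S] by (simp add: X_def)
  moreover have "(\<Sum>B\<in>P. real (card B)) = real (card X)"
    using sum_card_blocks[of X P] P assms(1) by (simp add: X_def flip: of_nat_sum)
  ultimately show ?thesis
    using null
    by (simp add: restr_def flip: sum_divide_distrib sum_distrib_right add_divide_distrib)
      (simp add: field_simps)
qed

lemma avg_game_insert_null_player:
  assumes "finite N" "j \<in> N" "null_player N w j" "S \<subseteq> N - {j}"
  shows "avg_game N w (insert j S) = avg_game N w S"
proof -
  have "avg_game N w S = avg_game (N - {j}) (restr N w j) S"
    using avg_game_restr[OF assms(1,2,4)] by simp
  also have "\<dots> = avg_game N w (insert j S)"
    using assms restr_null_player[OF assms(1-3)]
    by (auto simp: avg_game_def embedded_def set_diff_eq intro!: sum.cong)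
  finally show ?thesis by simp
qed

lemma shapley_null_player:
  assumes "\<And>S. S \<subseteq> N - {j} \<Longrightarrow> v (insert j S) = v S"
  shows "shapley N v j = 0"
  using assms by (simp add: shapley_def)

theorem proposition4:
  fixes N T :: "'a set" and w :: "'a tux" and j :: 'a
  assumes "finite N"
    and "tux_game N w"
    and "j \<in> N"
    and "T \<subseteq> N - {j}"
    and "null_player N w j"
  shows "\<forall>xs. distinct xs \<and> set xs = T \<longrightarrow> MPW (N - T) (restr_list N w xs) j = 0"
proof (intro allI impI)
  fix xs assume xs: "distinct xs \<and> set xs = T"
  have restricted: "avg_game (N - T) (restr_list N w xs) S = avg_game N w S" if "S \<subseteq> N - T" for S
    using avg_game_restr_list[OF assms(1)] xs assms(4) that by auto
  show "MPW (N - T) (restr_list N w xs) j = 0"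
    unfolding MPW_def
  proof (rule shapley_null_player)
    fix S assume "S \<subseteq> N - T - {j}"
    then have "insert j S \<subseteq> N - T" "S \<subseteq> N - T" "S \<subseteq> N - {j}"
      using assms(3,4) by auto
    then show "avg_game (N - T) (restr_list N w xs) (insert j S) = avg_game (N - T) (restr_list N w xs) S"
      using restricted avg_game_insert_null_player[OF assms(1,3,5)] by simp
  qed
qed

end
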